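(* Let $R\subset\mathbb{R}^N$ be a finite reduced root system with positive roots $R_+$ and multiplicity function $\kappa$, with Dunkl operators $\mathcal{D}_i$ as in the context. For $a,b\in\mathbb{R}^N$ set $J_{a,b}=\langle a,x\rangle\langle b,\nabla_\kappa\rangle-\langle b,x\rangle\langle a,\nabla_\kappa\rangle$ and $\mathcal{J}=\sum_{1\le i<j\le N}J_{\varepsilon_i,\varepsilon_j}^2$, where $\varepsilon_i$ are the standard unit vectors. Then, as operators on polynomials, \[ \mathcal{J}=|x|^2\Delta_\kappa-\langle x,\nabla_\kappa\rangle^2-(N-2)\langle x,\nabla_\kappa\rangle-2\sum_{v\in R_+}\kappa_v\sigma_v\langle x,\nabla_\kappa\rangle . \]
   Context: Vectors in $\mathbb{R}^N$ are row vectors, $\langle x,y\rangle=\sum x_iy_i$, $|x|^2=\langle x,x\rangle$. For $v\neq0$, $x\sigma_v=x-2\frac{\langle x,v\rangle}{|v|^2}v$. A finite reduced root system is a finite set $R$ of nonzero vectors with $u\sigma_v\in R$ for $u,v\in R$ and such that $u,cu\in R$ implies $c=\pm1$; $W(R)$ is the group generated by the $\sigma_v$; $R_+=\{v\in R:\langle u_0,v\rangle>0\}$ for a fixed $u_0$ with $\langle u_0,v\rangle\ne0$ for all $v\in R$. A multiplicity function $v\mapsto\kappa_v$ is constant on $W(R)$-orbits (values real or formal parameters). Dunkl operators: $\mathcal{D}_if(x)=\partial_if(x)+\sum_{v\in R_+}\kappa_v\frac{f(x)-f(x\sigma_v)}{\langle x,v\rangle}v_i$; $\langle a,\nabla_\kappa\rangle=\sum_ia_i\mathcal{D}_i$;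 $\langle x,\nabla_\kappa\rangle=\sum_ix_i\mathcal{D}_i$; $\Delta_\kappa=\sum_i\mathcal{D}_i^2$. The operator $\sigma_v$ acts by $(\sigma_vf)(x)=f(x\sigma_v)$; $\langle a,x\rangle$ and $|x|^2$ act by multiplication. *)

theory Defs
  imports "HOL-Analysis.Analysis"
begin

type_synonym 'n fn = "(real^'n) \<Rightarrow> real"

definition refl :: "real^'n::finite \<Rightarrow> real^'n \<Rightarrow> real^'n" where
  "refl v x = x - (2 * (x \<bullet> v) / (v \<bullet> v)) *\<^sub>R v"

definition root_system :: "(real^'n::finite) set \<Rightarrow> bool" where
  "root_system R \<longleftrightarrow> finite R \<and> 0 \<notin> R \<and>
     (\<forall>u\<in>R. \<forall>v\<in>R. refl v u \<in> R) \<and>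
     (\<forall>u\<in>R. \<forall>c::real. c *\<^sub>R u \<in> R \<longrightarrow> c = 1 \<or> c = -1)"

definition pos_roots :: "(real^'n::finite) set \<Rightarrow> real^'n \<Rightarrow> (real^'n) set" where
  "pos_roots R u0 = {v \<in> R. u0 \<bullet> v > 0}"

definition divdiff :: "real^'n::finite \<Rightarrow> 'n fn \<Rightarrow> 'n fn" where
  "divdiff v f x = (if x \<bullet> v \<noteq> 0 then (f x - f (refl v x)) / (x \<bullet> v)
     else Lim (at x within {y. y \<bullet> v \<noteq> 0}) (\<lambda>y. (f y - f (refl v y)) / (y \<bullet> v)))"

definition partial :: "'n::finite \<Rightarrow> 'n fn \<Rightarrow> 'n fn" where
  "partial i f x = frechet_derivative f (at x) (axis i 1)"

definition dunkl :: "(real^'n::finite) set \<Rightarrow> real^'n \<Rightarrow> (real^'n \<Rightarrow> real) \<Rightarrow> 'n \<Rightarrow> 'n fn \<Rightarrow> 'n fn" where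
  "dunkl R u0 \<kappa> i f x = partial i f x
     + (\<Sum>v\<in>pos_roots R u0. \<kappa> v * divdiff v f x * v $ i)"

definition dir_dunkl :: "(real^'n::finite) set \<Rightarrow> real^'n \<Rightarrow> (real^'n \<Rightarrow> real) \<Rightarrow> real^'n \<Rightarrow> 'n fn \<Rightarrow> 'n fn" where
  "dir_dunkl R u0 \<kappa> a f x = (\<Sum>i\<in>UNIV. a $ i * dunkl R u0 \<kappa> i f x)"

definition euler_dunkl :: "(real^'n::finite) set \<Rightarrow> real^'n \<Rightarrow> (real^'n \<Rightarrow> real) \<Rightarrow> 'n fn \<Rightarrow> 'n fn" where
  "euler_dunkl R u0 \<kappa> f x = (\<Sum>i\<in>UNIV. x $ i * dunkl R u0 \<kappa> i f x)"

definition dunkl_laplacian :: "(real^'n::finite) set \<Rightarrow> real^'n \<Rightarrow> (real^'n \<Rightarrow> real) \<Rightarrow> 'n fn \<Rightarrow> 'n fn" where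
  "dunkl_laplacian R u0 \<kappa> f x = (\<Sum>i\<in>UNIV. dunkl R u0 \<kappa> i (dunkl R u0 \<kappa> i f) x)"

definition Jop :: "(real^'n::finite) set \<Rightarrow> real^'n \<Rightarrow> (real^'n \<Rightarrow> real) \<Rightarrow> real^'n \<Rightarrow> real^'n \<Rightarrow> 'n fn \<Rightarrow> 'n fn" where
  "Jop R u0 \<kappa> a b f x = (a \<bullet> x) * dir_dunkl R u0 \<kappa> b f x - (b \<bullet> x) * dir_dunkl R u0 \<kappa> a f x"

definition Jcal where
  "Jcal R u0 \<kappa> f x = (\<Sum>(i,j)\<in>{(i::'n::{finite,linorder},j). i < j}.
     Jop R u0 \<kappa> (axis i 1) (axis j 1) (Jop R u0 \<kappa> (axis i 1) (axis j 1) f) (x::(real,'n) vec))"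

end

theory Submission
  imports Defs
begin

(* Everything rests on the commutation relation of Dunkl operators with coordinates,
     D_i (x_j g) = x_j D_i g + delta_ij g + sum_v 2 kappa_v v_i v_j / |v|^2 g(x sigma_v),
   valid for polynomial g. Since J_ij = - J_ji and J_ii = 0, the sum of J_ij^2 over i < j equals
   the sum over all (i, j) of x_i D_j x_i D_j - x_i D_j x_j D_i. Moving every coordinate
   multiplication to the left with the commutation relation, and doing the same for <x,nabla>^2
   and for sigma_v <x,nabla> (where x sigma_v = x - 2 <x,v> / |v|^2 v), turns the claim into a
   linear identity between |x|^2 Delta, sum x_i x_j D_i D_j, <x,nabla>, and the reflected terms. Polynomiality is what makes the Dunkl operators
   additive: the divided difference of a polynomial is again a polynomial, hence continuous
   across the hyperplane where divdiff is defined as a limit. *)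

lemma sum_less_pairs_swap_add:
  fixes h :: "'i::{finite,linorder} \<Rightarrow> 'i \<Rightarrow> 'a::ab_group_add"
  shows "(\<Sum>(i, j)\<in>{(i, j). i < j}. h i j + h j i) = (\<Sum>i\<in>UNIV. \<Sum>j\<in>UNIV. h i j) - (\<Sum>i\<in>UNIV. h i i)"
proof -
  let ?L = "{(i::'i, j). i < j}" and ?G = "{(i::'i, j). j < i}" and ?E = "{(i::'i, j). i = j}"
  have "UNIV = ?L \<union> ?G \<union> ?E"
    by auto
  then have "(\<Sum>i\<in>UNIV. \<Sum>j\<in>UNIV. h i j) = (\<Sum>p\<in>?L \<union> ?G \<union> ?E. case_prod h p)"
    by (simp add: sum.cartesian_product)
  also have "\<dots> = (\<Sum>p\<in>?L. case_prod h p) + (\<Sum>p\<in>?G. case_prod h p) + (\<Sum>p\<in>?E. case_prod h p)"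
  proof -
    have "?L \<inter> ?G = {}" and "(?L \<union> ?G) \<inter> ?E = {}"
      by auto
    then show ?thesis
      by (simp add: sum.union_disjoint)
  qed
  also have "(\<Sum>p\<in>?G. case_prod h p) = (\<Sum>(i, j)\<in>?L. h j i)"
    by (rule sum.reindex_bij_witness[of _ prod.swap prod.swap]) auto
  also have "(\<Sum>p\<in>?E. case_prod h p) = (\<Sum>i\<in>UNIV. h i i)"
    by (rule sum.reindex_bij_witness[of _ "\<lambda>i. (i, i)" fst]) auto
  finally show ?thesis
    by (simp add: sum.distrib split_def)
qed

lemma sum_pairs_factor_inner:
  fixes x :: "real^'n::finite" and c :: "real^'n \<Rightarrow> real"
  shows "(\<Sum>i\<in>UNIV. \<Sum>j\<in>UNIV. \<Sum>v\<in>V. c v * (x $ i * v $ i * (v $ j * g v j)))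
    = (\<Sum>v\<in>V. c v * ((x \<bullet> v) * (\<Sum>j\<in>UNIV. v $ j * g v j)))"
  unfolding inner_vec_def inner_real_def sum_product
  by (simp only: sum_distrib_left sum.swap[of _ V])

lemma partial_has_derivative:
  "(f has_derivative f') (at x) \<Longrightarrow> partial i f x = f' (axis i 1)"
  by (metis frechet_derivative_at partial_def)

lemma partial_bounded_linear: "bounded_linear f \<Longrightarrow> partial i f x = f (axis i 1)"
  by (simp add: partial_has_derivative bounded_linear_imp_has_derivative)

lemma partial_add:
  assumes "f differentiable at x" and "g differentiable at x"
  shows "partial i (\<lambda>y. f y + g y) x = partial i f x + partial i g x"
  using partial_has_derivative[OF has_derivative_add[OF assms[unfolded frechet_derivative_works]], of i]
  by (simp only: partial_def)

lemma partial_diff: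
  assumes "f differentiable at x" and "g differentiable at x"
  shows "partial i (\<lambda>y. f y - g y) x = partial i f x - partial i g x"
  using partial_has_derivative[OF has_derivative_diff[OF assms[unfolded frechet_derivative_works]], of i]
  by (simp only: partial_def)

lemma partial_mult:
  assumes "f differentiable at x" and "g differentiable at x"
  shows "partial i (\<lambda>y. f y * g y) x = f x * partial i g x + partial i f x * g x"
  using partial_has_derivative[OF has_derivative_mult[OF assms[unfolded frechet_derivative_works]], of i]
  by (simp only: partial_def)

lemma partial_sum:
  assumes "finite I" and "\<And>j. j \<in> I \<Longrightarrow> h j differentiable at x"
  shows "partial i (\<lambda>y. \<Sum>j\<in>I. h j y) x = (\<Sum>j\<in>I. partial i (h j) x)"
proof -
  have "((\<lambda>y. \<Sum>j\<in>I. h j y) has_derivative (\<lambda>z. \<Sum>j\<in>I. frechet_derivative (h j) (at x) z)) (at x)"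
    using assms(2) by (intro has_derivative_sum) (simp add: frechet_derivative_works)
  from partial_has_derivative[OF this, of i] show ?thesis
    by (simp only: partial_def)
qed

lemma partial_coord: "partial i (\<lambda>y. y $ j) x = (if i = j then 1 else 0)"
  by (simp add: partial_bounded_linear bounded_linear_vec_nth axis_def)

lemma real_polynomial_function_coord_mult:
  "real_polynomial_function g \<Longrightarrow> real_polynomial_function (\<lambda>y. y $ j * g y)"
  by (rule real_polynomial_function.intros(4)[OF real_polynomial_function.intros(1)[OF bounded_linear_vec_nth]])

lemma real_polynomial_function_partial:
  "real_polynomial_function f \<Longrightarrow> real_polynomial_function (partial i f)"
proof (induction f rule: real_polynomial_function.induct)
  case (linear f)
  then show ?case by (simp add: partial_bounded_linear real_polynomial_function.intros(2))
next
  case (const c)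
  then show ?case by (simp add: partial_def real_polynomial_function.intros(2))
next
  case (add f g)
  then have "partial i (\<lambda>y. f y + g y) = (\<lambda>x. partial i f x + partial i g x)"
    by (auto simp: partial_add differentiable_at_real_polynomial_function)
  with add.IH show ?case by auto
next
  case (mult f g)
  then have "partial i (\<lambda>y. f y * g y) = (\<lambda>x. f x * partial i g x + partial i f x * g x)"
    by (auto simp: partial_mult differentiable_at_real_polynomial_function)
  with mult show ?case by auto
qed

lemma linear_refl: "linear (refl v)"
  by (rule linearI) (simp_all add: refl_def inner_add_left algebra_simps add_divide_distrib)

lemma real_polynomial_function_refl:
  assumes "real_polynomial_function g"
  shows "real_polynomial_function (\<lambda>x. g (refl v x))"
proof -
  have "polynomial_function (refl v)"
    by (intro polynomial_function_bounded_linear linear_conv_bounded_linear[THEN iffD1] linear_refl)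
  from real_polynomial_function_compose[OF this assms] show ?thesis
    by (simp add: o_def)
qed

lemma real_polynomial_function_reflection_quotient:
  "real_polynomial_function f \<Longrightarrow>
     \<exists>q. real_polynomial_function q \<and> (\<forall>x. f x - f (refl v x) = (x \<bullet> v) * q x)"
proof (induction f rule: real_polynomial_function.induct)
  case (linear f)
  then have "f x - f (refl v x) = (x \<bullet> v) * (2 / (v \<bullet> v) * f v)" for x
    by (simp add: refl_def linear_simps)
  then show ?case by blast
next
  case (const c)
  show ?case by (auto intro: real_polynomial_function.intros(2))
next
  case (add f g)
  then obtain p q where p: "real_polynomial_function p" "\<And>x. f x - f (refl v x) = (x \<bullet> v) * p x"
    and q: "real_polynomial_function q" "\<And>x. g x - g (refl v x) = (x \<bullet> v) * q x"
    by blast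
  have "f x + g x - (f (refl v x) + g (refl v x)) = (x \<bullet> v) * (p x + q x)" for x
    by (simp only: add_diff_add p(2) q(2) distrib_left)
  moreover have "real_polynomial_function (\<lambda>x. p x + q x)"
    using p(1) q(1) by (rule real_polynomial_function.intros(3))
  ultimately show ?case by blast
next
  case (mult f g)
  then obtain p q where p: "real_polynomial_function p" "\<And>x. f x - f (refl v x) = (x \<bullet> v) * p x"
    and q: "real_polynomial_function q" "\<And>x. g x - g (refl v x) = (x \<bullet> v) * q x"
    by blast
  have "f x * g x - f (refl v x) * g (refl v x)
      = f x * (g x - g (refl v x)) + (f x - f (refl v x)) * g (refl v x)" for x
    by (simp add: algebra_simps)
  then have "f x * g x - f (refl v x) * g (refl v x)
      = (x \<bullet> v) * (f x * q x + p x * g (refl v x))" for x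
    by (simp only: p(2) q(2)) (simp add: algebra_simps)
  moreover have "real_polynomial_function (\<lambda>x. f x * q x + p x * g (refl v x))"
    using mult.hyps p(1) q(1) real_polynomial_function_refl[OF mult.hyps(2)]
    by (intro real_polynomial_function.intros(3,4))
  ultimately show ?case by blast
qed

lemma islimpt_nonorthogonal:
  assumes "v \<noteq> 0" and "x \<bullet> v = 0"
  shows "x islimpt {y. y \<bullet> v \<noteq> 0}"
proof -
  have "closure {y. y \<bullet> v \<noteq> 0} = UNIV"
    using interior_hyperplane[OF assms(1), of 0]
    by (simp add: closure_interior Compl_eq inner_commute)
  with assms(2) show ?thesis
    by (simp add: islimpt_in_closure)
qed

lemma divdiff_nonorthogonal:
  "x \<bullet> v \<noteq> 0 \<Longrightarrow> (x \<bullet> v) * divdiff v f x = f x - f (refl v x)"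
  by (simp add: divdiff_def)

lemma divdiff_unique:
  assumes "v \<noteq> 0" and "\<And>x. isCont q x"
    and "\<And>x. x \<bullet> v \<noteq> 0 \<Longrightarrow> f x - f (refl v x) = (x \<bullet> v) * q x"
  shows "divdiff v f = q"
proof
  fix x
  show "divdiff v f x = q x"
  proof (cases "x \<bullet> v = 0")
    case False
    with divdiff_nonorthogonal[OF False, of f] assms(3)[OF False] show ?thesis
      by simp
  next
    case True
    let ?F = "at x within {y. y \<bullet> v \<noteq> 0}"
    have "(q \<longlongrightarrow> q x) ?F"
      by (meson assms(2) continuous_at_imp_continuous_within continuous_within)
    moreover have "eventually (\<lambda>y. q y = (f y - f (refl v y)) / (y \<bullet> v)) ?F"
      by (auto simp: eventually_at_filter assms(3))
    ultimately have "((\<lambda>y. (f y - f (refl v y)) / (y \<bullet> v)) \<longlongrightarrow> q x) ?F"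
      by (rule Lim_transform_eventually)
    moreover have "\<not> trivial_limit ?F"
      using islimpt_nonorthogonal[OF assms(1) True] by (simp add: trivial_limit_within)
    ultimately show ?thesis
      using True by (simp add: divdiff_def tendsto_Lim)
  qed
qed

lemma real_polynomial_function_divdiff:
  assumes "v \<noteq> 0" and "real_polynomial_function f"
  shows "real_polynomial_function (divdiff v f)"
proof -
  obtain q where "real_polynomial_function q" "\<And>x. f x - f (refl v x) = (x \<bullet> v) * q x"
    using real_polynomial_function_reflection_quotient[OF assms(2)] by blast
  moreover from this have "divdiff v f = q"
    by (intro divdiff_unique assms(1) continuous_real_polymonial_function)
  ultimately show ?thesis by simp
qed

lemma divdiff_diff:
  assumes "v \<noteq> 0" and "real_polynomial_function f" and "real_polynomial_function g"
  shows "divdiff v (\<lambda>y. f y - g y) x = divdiff v f x - divdiff v g x"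
proof -
  have "divdiff v (\<lambda>y. f y - g y) = (\<lambda>x. divdiff v f x - divdiff v g x)"
    using assms by (intro divdiff_unique continuous_real_polymonial_function real_polynomial_function_diff
        real_polynomial_function_divdiff) (auto simp: right_diff_distrib divdiff_nonorthogonal)
  then show ?thesis by simp
qed

lemma divdiff_sum:
  assumes "v \<noteq> 0" and "finite I" and "\<And>j. j \<in> I \<Longrightarrow> real_polynomial_function (h j)"
  shows "divdiff v (\<lambda>y. \<Sum>j\<in>I. h j y) x = (\<Sum>j\<in>I. divdiff v (h j) x)"
proof -
  have "divdiff v (\<lambda>y. \<Sum>j\<in>I. h j y) = (\<lambda>x. \<Sum>j\<in>I. divdiff v (h j) x)"
    using assms by (intro divdiff_unique continuous_real_polymonial_function real_polynomial_function_sum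
        real_polynomial_function_divdiff) (auto simp: sum_distrib_left divdiff_nonorthogonal sum_subtractf)
  then show ?thesis by simp
qed

lemma divdiff_coord_mult:
  assumes "v \<noteq> 0" and "real_polynomial_function g"
  shows "divdiff v (\<lambda>y. y $ j * g y) x = x $ j * divdiff v g x + 2 * v $ j / (v \<bullet> v) * g (refl v x)"
proof -
  have "divdiff v (\<lambda>y. y $ j * g y) = (\<lambda>x. x $ j * divdiff v g x + 2 * v $ j / (v \<bullet> v) * g (refl v x))"
  proof (rule divdiff_unique[OF assms(1)])
    show "isCont (\<lambda>x. x $ j * divdiff v g x + 2 * v $ j / (v \<bullet> v) * g (refl v x)) x" for x
      using real_polynomial_function_refl[OF assms(2)] real_polynomial_function_divdiff[OF assms]
      by (intro continuous_real_polymonial_function real_polynomial_function.intros(3,4)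
          real_polynomial_function.intros(1)[OF bounded_linear_vec_nth] real_polynomial_function.intros(2))
    show "x $ j * g x - refl v x $ j * g (refl v x)
        = (x \<bullet> v) * (x $ j * divdiff v g x + 2 * v $ j / (v \<bullet> v) * g (refl v x))"
      if "x \<bullet> v \<noteq> 0" for x
    proof -
      have "x $ j * g x - refl v x $ j * g (refl v x)
          = x $ j * (g x - g (refl v x)) + (x \<bullet> v) * (2 * v $ j / (v \<bullet> v) * g (refl v x))"
        by (simp add: refl_def algebra_simps)
      then show ?thesis
        by (simp add: divdiff_nonorthogonal[OF that, symmetric] algebra_simps)
    qed
  qed
  then show ?thesis by simp
qed

lemma dir_dunkl_axis: "dir_dunkl R u0 \<kappa> (axis i 1) f x = dunkl R u0 \<kappa> i f x"
proof -
  have "axis i 1 $ k * c = (if k = i then c else 0)" for k and c :: real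
    by (simp add: axis_def)
  then show ?thesis
    by (simp add: dir_dunkl_def)
qed

lemma Jop_axis:
  "Jop R u0 \<kappa> (axis i 1) (axis j 1) f x = x $ i * dunkl R u0 \<kappa> j f x - x $ j * dunkl R u0 \<kappa> i f x"
  by (simp add: Jop_def dir_dunkl_axis inner_axis')

lemma euler_dunkl_refl:
  "euler_dunkl R u0 \<kappa> f (refl v x)
     = dir_dunkl R u0 \<kappa> x f (refl v x) - 2 * (x \<bullet> v) / (v \<bullet> v) * dir_dunkl R u0 \<kappa> v f (refl v x)"
  by (simp add: euler_dunkl_def dir_dunkl_def refl_def algebra_simps sum_subtractf sum_distrib_left)

locale dunkl_operators =
  fixes R :: "(real^'n::finite) set" and u0 :: "real^'n" and \<kappa> :: "real^'n \<Rightarrow> real"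
  assumes finite_pos_roots: "finite (pos_roots R u0)"
    and zero_notin_pos_roots: "0 \<notin> pos_roots R u0"
begin

abbreviation D where "D \<equiv> dunkl R u0 \<kappa>"

lemma pos_root_nonzero: "v \<in> pos_roots R u0 \<Longrightarrow> v \<noteq> 0"
  using zero_notin_pos_roots by blast

lemma real_polynomial_function_dunkl:
  "real_polynomial_function f \<Longrightarrow> real_polynomial_function (D i f)"
  unfolding dunkl_def using finite_pos_roots pos_root_nonzero
  by (intro real_polynomial_function.intros(2-4) real_polynomial_function_partial
      real_polynomial_function_sum real_polynomial_function_divdiff) auto

lemma dunkl_diff:
  assumes "real_polynomial_function f" and "real_polynomial_function g"
  shows "D i (\<lambda>y. f y - g y) x = D i f x - D i g x"
  using assms
  by (simp add: dunkl_def partial_diff differentiable_at_real_polynomial_function divdiff_diff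
      pos_root_nonzero sum_subtractf algebra_simps cong: sum.cong)

lemma dunkl_sum:
  assumes "finite I" and "\<And>j. j \<in> I \<Longrightarrow> real_polynomial_function (h j)"
  shows "D i (\<lambda>y. \<Sum>j\<in>I. h j y) x = (\<Sum>j\<in>I. D i (h j) x)"
  using assms
  by (simp add: dunkl_def partial_sum differentiable_at_real_polynomial_function divdiff_sum
      pos_root_nonzero sum.distrib sum_distrib_left sum_distrib_right sum.swap[of _ I] cong: sum.cong)

lemma dunkl_coord_mult:
  assumes "real_polynomial_function g"
  shows "D i (\<lambda>y. y $ j * g y) x = x $ j * D i g x + (if i = j then g x else 0)
    + (\<Sum>v\<in>pos_roots R u0. \<kappa> v * (2 * v $ i * v $ j / (v \<bullet> v)) * g (refl v x))"
proof -
  have "partial i (\<lambda>y. y $ j * g y) x = x $ j * partial i g x + (if i = j then g x else 0)"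
    using assms by (simp add: partial_mult partial_coord differentiable_at_real_polynomial_function
        bounded_linear_imp_differentiable bounded_linear_vec_nth)
  moreover have "(\<Sum>v\<in>pos_roots R u0. \<kappa> v * divdiff v (\<lambda>y. y $ j * g y) x * v $ i)
      = (\<Sum>v\<in>pos_roots R u0. \<kappa> v * (x $ j * divdiff v g x + 2 * v $ j / (v \<bullet> v) * g (refl v x)) * v $ i)"
    using assms by (intro sum.cong) (simp_all add: divdiff_coord_mult pos_root_nonzero)
  ultimately show ?thesis
    by (simp add: dunkl_def sum.distrib sum_distrib_left algebra_simps)
qed


lemma Jop_axis_square:
  assumes "real_polynomial_function f"
  shows "Jop R u0 \<kappa> (axis i 1) (axis j 1) (Jop R u0 \<kappa> (axis i 1) (axis j 1) f) x
    = (x $ i * D j (\<lambda>y. y $ i * D j f y) x - x $ i * D j (\<lambda>y. y $ j * D i f y) x)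
      + (x $ j * D i (\<lambda>y. y $ j * D i f y) x - x $ j * D i (\<lambda>y. y $ i * D j f y) x)"
proof -
  have "Jop R u0 \<kappa> (axis i 1) (axis j 1) f = (\<lambda>y. y $ i * D j f y - y $ j * D i f y)"
    by (simp add: Jop_axis fun_eq_iff)
  then show ?thesis
    using assms by (simp add: Jop_axis dunkl_diff real_polynomial_function_coord_mult
        real_polynomial_function_dunkl algebra_simps)
qed

lemma sum_xi_Dj_xi_Dj:
  assumes "real_polynomial_function f"
  shows "(\<Sum>i\<in>UNIV. \<Sum>j\<in>UNIV. x $ i * D j (\<lambda>y. y $ i * D j f y) x)
    = (x \<bullet> x) * dunkl_laplacian R u0 \<kappa> f x + euler_dunkl R u0 \<kappa> f x
      + (\<Sum>v\<in>pos_roots R u0. 2 * \<kappa> v * (x \<bullet> v) / (v \<bullet> v) * dir_dunkl R u0 \<kappa> v f (refl v x))"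
proof -
  define c where "c v = 2 * \<kappa> v / (v \<bullet> v)" for v :: "real^'n"
  have expand: "x $ i * D j (\<lambda>y. y $ i * D j f y) x = x $ i * x $ i * D j (D j f) x
      + (if i = j then x $ i * D i f x else 0)
      + (\<Sum>v\<in>pos_roots R u0. c v * (x $ i * v $ i * (v $ j * D j f (refl v x))))" for i j
    using assms by (simp add: c_def dunkl_coord_mult real_polynomial_function_dunkl sum_distrib_left algebra_simps)
  have "(\<Sum>i\<in>UNIV. \<Sum>j\<in>UNIV. x $ i * D j (\<lambda>y. y $ i * D j f y) x)
      = (\<Sum>i\<in>UNIV. \<Sum>j\<in>UNIV. x $ i * x $ i * D j (D j f) x) + (\<Sum>i\<in>UNIV. x $ i * D i f x)
        + (\<Sum>i\<in>UNIV. \<Sum>j\<in>UNIV. \<Sum>v\<in>pos_roots R u0. c v * (x $ i * v $ i * (v $ j * D j f (refl v x))))"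
    unfolding expand sum.distrib by simp
  also have "(\<Sum>i\<in>UNIV. \<Sum>j\<in>UNIV. x $ i * x $ i * D j (D j f) x) = (x \<bullet> x) * dunkl_laplacian R u0 \<kappa> f x"
    by (simp add: inner_vec_def dunkl_laplacian_def sum_product)
  also have "(\<Sum>i\<in>UNIV. x $ i * D i f x) = euler_dunkl R u0 \<kappa> f x"
    by (simp add: euler_dunkl_def)
  finally show ?thesis
    unfolding sum_pairs_factor_inner by (simp add: dir_dunkl_def c_def mult_ac)
qed

lemma sum_xi_Dj_xj_Di:
  assumes "real_polynomial_function f"
  shows "(\<Sum>i\<in>UNIV. \<Sum>j\<in>UNIV. x $ i * D j (\<lambda>y. y $ j * D i f y) x)
    = (\<Sum>i\<in>UNIV. \<Sum>j\<in>UNIV. x $ i * x $ j * D i (D j f) x) + real CARD('n) * euler_dunkl R u0 \<kappa> f x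
      + 2 * (\<Sum>v\<in>pos_roots R u0. \<kappa> v * dir_dunkl R u0 \<kappa> x f (refl v x))"
proof -
  define w where "w v j = \<kappa> v * (2 * (v $ j * v $ j) / (v \<bullet> v))" for v :: "real^'n" and j
  have expand: "x $ i * D j (\<lambda>y. y $ j * D i f y) x = x $ i * x $ j * D j (D i f) x + x $ i * D i f x
      + (\<Sum>v\<in>pos_roots R u0. x $ i * D i f (refl v x) * w v j)" for i j
    using assms by (simp add: w_def dunkl_coord_mult real_polynomial_function_dunkl sum_distrib_left algebra_simps)
  have w_sum: "(\<Sum>j\<in>UNIV. w v j) = 2 * \<kappa> v" if "v \<in> pos_roots R u0" for v
  proof -
    have "(\<Sum>j\<in>UNIV. w v j) = 2 * \<kappa> v * (\<Sum>j\<in>UNIV. v $ j * v $ j) / (v \<bullet> v)"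
      by (simp add: w_def sum_divide_distrib sum_distrib_left mult_ac)
    also have "(\<Sum>j\<in>UNIV. v $ j * v $ j) = v \<bullet> v"
      by (simp add: inner_vec_def)
    finally show ?thesis
      using pos_root_nonzero[OF that] by simp
  qed
  have "(\<Sum>i\<in>UNIV. \<Sum>j\<in>UNIV. x $ i * D j (\<lambda>y. y $ j * D i f y) x)
      = (\<Sum>i\<in>UNIV. \<Sum>j\<in>UNIV. x $ i * x $ j * D j (D i f) x) + (\<Sum>i\<in>UNIV. \<Sum>j::'n\<in>UNIV. x $ i * D i f x)
        + (\<Sum>i\<in>UNIV. \<Sum>j\<in>UNIV. \<Sum>v\<in>pos_roots R u0. x $ i * D i f (refl v x) * w v j)"
    by (simp only: expand sum.distrib)
  also have "(\<Sum>i\<in>UNIV. \<Sum>j\<in>UNIV. x $ i * x $ j * D j (D i f) x)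
      = (\<Sum>i\<in>UNIV. \<Sum>j\<in>UNIV. x $ i * x $ j * D i (D j f) x)"
    by (subst sum.swap) (simp add: mult_ac)
  also have "(\<Sum>i\<in>UNIV. \<Sum>j::'n\<in>UNIV. x $ i * D i f x) = real CARD('n) * euler_dunkl R u0 \<kappa> f x"
    by (simp add: euler_dunkl_def sum_distrib_left)
  also have "(\<Sum>i\<in>UNIV. \<Sum>j\<in>UNIV. \<Sum>v\<in>pos_roots R u0. x $ i * D i f (refl v x) * w v j)
      = (\<Sum>v\<in>pos_roots R u0. dir_dunkl R u0 \<kappa> x f (refl v x) * (\<Sum>j\<in>UNIV. w v j))"
    unfolding dir_dunkl_def sum_product by (simp only: sum.swap[of _ "pos_roots R u0"])
  finally show ?thesis
    using w_sum by (simp add: sum_distrib_left mult_ac cong: sum.cong)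
qed

lemma euler_dunkl_euler_dunkl:
  assumes "real_polynomial_function f"
  shows "euler_dunkl R u0 \<kappa> (euler_dunkl R u0 \<kappa> f) x
    = (\<Sum>i\<in>UNIV. \<Sum>j\<in>UNIV. x $ i * x $ j * D i (D j f) x) + euler_dunkl R u0 \<kappa> f x
      + (\<Sum>v\<in>pos_roots R u0. 2 * \<kappa> v * (x \<bullet> v) / (v \<bullet> v) * dir_dunkl R u0 \<kappa> v f (refl v x))"
proof -
  define c where "c v = 2 * \<kappa> v / (v \<bullet> v)" for v :: "real^'n"
  have expand: "x $ i * D i (\<lambda>y. y $ j * D j f y) x = x $ i * x $ j * D i (D j f) x
      + (if i = j then x $ i * D i f x else 0)
      + (\<Sum>v\<in>pos_roots R u0. c v * (x $ i * v $ i * (v $ j * D j f (refl v x))))" for i j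
    using assms by (simp add: c_def dunkl_coord_mult real_polynomial_function_dunkl sum_distrib_left algebra_simps)
  have "euler_dunkl R u0 \<kappa> f = (\<lambda>y. \<Sum>j\<in>UNIV. y $ j * D j f y)"
    by (simp add: euler_dunkl_def fun_eq_iff)
  then have "euler_dunkl R u0 \<kappa> (euler_dunkl R u0 \<kappa> f) x
      = (\<Sum>i\<in>UNIV. \<Sum>j\<in>UNIV. x $ i * D i (\<lambda>y. y $ j * D j f y) x)"
    using assms by (simp add: euler_dunkl_def dunkl_sum real_polynomial_function_coord_mult
        real_polynomial_function_dunkl sum_distrib_left)
  also have "\<dots> = (\<Sum>i\<in>UNIV. \<Sum>j\<in>UNIV. x $ i * x $ j * D i (D j f) x) + (\<Sum>i\<in>UNIV. x $ i * D i f x)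
        + (\<Sum>i\<in>UNIV. \<Sum>j\<in>UNIV. \<Sum>v\<in>pos_roots R u0. c v * (x $ i * v $ i * (v $ j * D j f (refl v x))))"
    unfolding expand sum.distrib by simp
  finally show ?thesis
    unfolding sum_pairs_factor_inner by (simp add: euler_dunkl_def dir_dunkl_def c_def mult_ac)
qed

end

theorem mainTheorem12:
  fixes R :: "((real, 'n::{finite,linorder}) vec) set" and u0 :: "(real, 'n) vec"
    and \<kappa> :: "(real, 'n) vec \<Rightarrow> real" and f :: "(real, 'n) vec \<Rightarrow> real"
  assumes "root_system R"
    and "\<forall>v\<in>R. u0 \<bullet> v \<noteq> 0"
    and "\<forall>u\<in>R. \<forall>v\<in>R. \<kappa> (refl v u) = \<kappa> u"
    and "polynomial_function f"
  shows "Jcal R u0 \<kappa> f =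
    (\<lambda>x. (x \<bullet> x) * dunkl_laplacian R u0 \<kappa> f x
       - euler_dunkl R u0 \<kappa> (euler_dunkl R u0 \<kappa> f) x
       - (real CARD('n) - 2) * euler_dunkl R u0 \<kappa> f x
       - 2 * (\<Sum>v\<in>pos_roots R u0. \<kappa> v * euler_dunkl R u0 \<kappa> f (refl v x)))"
proof
  fix x :: "(real, 'n) vec"
  interpret dunkl_operators R u0 \<kappa>
    using assms(1) by unfold_locales (auto simp: root_system_def pos_roots_def)
  have f: "real_polynomial_function f"
    using assms(4) by (simp add: real_polynomial_function_eq)
  define h where "h i j = x $ i * D j (\<lambda>y. y $ i * D j f y) x - x $ i * D j (\<lambda>y. y $ j * D i f y) x"
    for i j
  have refl_sum: "(\<Sum>v\<in>pos_roots R u0. \<kappa> v * euler_dunkl R u0 \<kappa> f (refl v x))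
      = (\<Sum>v\<in>pos_roots R u0. \<kappa> v * dir_dunkl R u0 \<kappa> x f (refl v x))
        - (\<Sum>v\<in>pos_roots R u0. 2 * \<kappa> v * (x \<bullet> v) / (v \<bullet> v) * dir_dunkl R u0 \<kappa> v f (refl v x))"
    unfolding euler_dunkl_refl right_diff_distrib sum_subtractf by (simp add: mult_ac)
  have "Jcal R u0 \<kappa> f x = (\<Sum>(i, j)\<in>{(i, j). i < j}. h i j + h j i)"
    by (simp add: Jcal_def Jop_axis_square[OF f] h_def)
  also have "\<dots> = (\<Sum>i\<in>UNIV. \<Sum>j\<in>UNIV. h i j)"
    by (simp add: sum_less_pairs_swap_add h_def)
  also have "\<dots> = (\<Sum>i\<in>UNIV. \<Sum>j\<in>UNIV. x $ i * D j (\<lambda>y. y $ i * D j f y) x)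
      - (\<Sum>i\<in>UNIV. \<Sum>j\<in>UNIV. x $ i * D j (\<lambda>y. y $ j * D i f y) x)"
    by (simp add: h_def sum_subtractf)
  finally show "Jcal R u0 \<kappa> f x = (x \<bullet> x) * dunkl_laplacian R u0 \<kappa> f x
       - euler_dunkl R u0 \<kappa> (euler_dunkl R u0 \<kappa> f) x
       - (real CARD('n) - 2) * euler_dunkl R u0 \<kappa> f x
       - 2 * (\<Sum>v\<in>pos_roots R u0. \<kappa> v * euler_dunkl R u0 \<kappa> f (refl v x))"
    unfolding sum_xi_Dj_xi_Dj[OF f] sum_xi_Dj_xj_Di[OF f] euler_dunkl_euler_dunkl[OF f] refl_sum
    by (simp add: algebra_simps)
qed

end
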